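(* Let $G=(V,E,C,\ell)$ be an edge-labeled hypergraph with maximum hyperedge size $r$. Let $Y_{\mathrm{MV}}$ be a majority-vote clustering: for each node $u$, $Y_{\mathrm{MV}}[u]$ is a category $c$ maximizing the number of hyperedges $e\ni u$ with $\ell(e)=c$ (ties broken arbitrarily). Then $\mathrm{CatEdgeClus}(Y_{\mathrm{MV}})\le r\cdot\min_{Y:V\to C}\mathrm{CatEdgeClus}(Y)$.
   Context: An edge-labeled hypergraph $G=(V,E,C,\ell)$ consists of a finite node set $V$, a finite collection $E$ of hyperedges (nonempty subsets of $V$), a finite set $C$ of categories, and a labeling $\ell:E\to C$; $r=\max_{e\in E}|e|$. A clustering is a map $Y:V\to C$. For $e\in E$, $m_Y(e)=1$ if $Y[i]\neq\ell(e)$ for some $i\in e$, and $m_Y(e)=0$ otherwise; $\mathrm{CatEdgeClus}(Y)=\sum_{e\in E}m_Y(e)$. *)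

theory Defs
  imports Main
begin

text \<open>Edge-labeled hypergraph: node set V, hyperedges indexed by a finite set E of
  edge identifiers (so E may be a multiset of node sets), each with node set
  verts e and label lab e in category set C.\<close>

definition edge_labeled_hypergraph ::
  "'v set \<Rightarrow> 'e set \<Rightarrow> ('e \<Rightarrow> 'v set) \<Rightarrow> 'c set \<Rightarrow> ('e \<Rightarrow> 'c) \<Rightarrow> bool" where
  "edge_labeled_hypergraph V E verts C lab \<longleftrightarrow>
     finite V \<and> finite E \<and> finite C \<and>
     (\<forall>e\<in>E. verts e \<noteq> {} \<and> verts e \<subseteq> V \<and> lab e \<in> C)"

definition max_edge_size :: "'e set \<Rightarrow> ('e \<Rightarrow> 'v set) \<Rightarrow> nat" where
  "max_edge_size E verts = Max ((\<lambda>e. card (verts e)) ` E)"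

definition is_clustering :: "'v set \<Rightarrow> 'c set \<Rightarrow> ('v \<Rightarrow> 'c) \<Rightarrow> bool" where
  "is_clustering V C Y \<longleftrightarrow> (\<forall>v\<in>V. Y v \<in> C)"

definition mistake :: "('e \<Rightarrow> 'v set) \<Rightarrow> ('e \<Rightarrow> 'c) \<Rightarrow> ('v \<Rightarrow> 'c) \<Rightarrow> 'e \<Rightarrow> nat" where
  "mistake verts lab Y e = (if \<exists>i\<in>verts e. Y i \<noteq> lab e then 1 else 0)"

definition CatEdgeClus :: "'e set \<Rightarrow> ('e \<Rightarrow> 'v set) \<Rightarrow> ('e \<Rightarrow> 'c) \<Rightarrow> ('v \<Rightarrow> 'c) \<Rightarrow> nat" where
  "CatEdgeClus E verts lab Y = (\<Sum>e\<in>E. mistake verts lab Y e)"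

definition label_degree :: "'e set \<Rightarrow> ('e \<Rightarrow> 'v set) \<Rightarrow> ('e \<Rightarrow> 'c) \<Rightarrow> 'v \<Rightarrow> 'c \<Rightarrow> nat" where
  "label_degree E verts lab u c = card {e\<in>E. u \<in> verts e \<and> lab e = c}"

definition majority_vote :: "'v set \<Rightarrow> 'e set \<Rightarrow> ('e \<Rightarrow> 'v set) \<Rightarrow> 'c set \<Rightarrow> ('e \<Rightarrow> 'c) \<Rightarrow> ('v \<Rightarrow> 'c) \<Rightarrow> bool" where
  "majority_vote V E verts C lab Y \<longleftrightarrow> is_clustering V C Y \<and>
     (\<forall>u\<in>V. \<forall>c\<in>C. label_degree E verts lab u c \<le> label_degree E verts lab u (Y u))"

end

theory Submission
  imports Defs
begin

text \<open>Compare the majority vote clustering \<open>Z\<close> with any clustering \<open>Y\<close> edge by edge,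
  keeping track of the nodes of each edge that are correctly labelled by one clustering
  but not by the other. On a single edge \<open>e\<close>, a mistake of \<open>Z\<close> plus the nodes of \<open>e\<close>
  only \<open>Z\<close> gets right is at most \<open>|e|\<close> times a mistake of \<open>Y\<close> plus the nodes only \<open>Y\<close>
  gets right. Summed over all edges, the nodes that only \<open>Y\<close> gets right are counted by
  the label degrees \<open>deg(u, Y u)\<close>, those that only \<open>Z\<close> gets right by \<open>deg(u, Z u)\<close>,
  and majority voting makes the latter dominate, so they cancel.\<close>

definition agree_only ::
  "('e \<Rightarrow> 'v set) \<Rightarrow> ('e \<Rightarrow> 'c) \<Rightarrow> ('v \<Rightarrow> 'c) \<Rightarrow> ('v \<Rightarrow> 'c) \<Rightarrow> 'e \<Rightarrow> 'v set" where
  "agree_only verts lab Y Z e = {u \<in> verts e. Y u = lab e \<and> Z u \<noteq> lab e}"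

lemma CatEdgeClus_le_card: "CatEdgeClus E verts lab Y \<le> card E"
proof -
  have "(\<Sum>e\<in>E. mistake verts lab Y e) \<le> (\<Sum>e\<in>E. 1)"
    by (rule sum_mono) (simp add: mistake_def)
  then show ?thesis by (simp add: CatEdgeClus_def)
qed

lemma mistake_add_card_correct_le:
  assumes "finite (verts e)"
  shows "mistake verts lab Y e + card {u \<in> verts e. Y u = lab e} \<le> card (verts e)"
proof (cases "\<exists>i\<in>verts e. Y i \<noteq> lab e")
  case True
  then have "{u \<in> verts e. Y u = lab e} \<subset> verts e" by blast
  then have "card {u \<in> verts e. Y u = lab e} < card (verts e)"
    using assms by (rule psubset_card_mono[rotated])
  then show ?thesis using True by (simp add: mistake_def)
next
  case False
  then show ?thesis by (simp add: mistake_def card_mono assms)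
qed

lemma mistake_add_card_agree_only_le:
  assumes "finite (verts e)"
  shows "mistake verts lab Z e + card (agree_only verts lab Z Y e)
           \<le> card (verts e) * mistake verts lab Y e + card (agree_only verts lab Y Z e)"
proof (cases "\<exists>i\<in>verts e. Y i \<noteq> lab e")
  case True
  have "agree_only verts lab Z Y e \<subseteq> {u \<in> verts e. Z u = lab e}"
    unfolding agree_only_def by blast
  then have "card (agree_only verts lab Z Y e) \<le> card {u \<in> verts e. Z u = lab e}"
    using assms by (intro card_mono) auto
  then show ?thesis
    using True mistake_add_card_correct_le[of verts e lab Z, OF assms] by (simp add: mistake_def)
next
  case False
  then have "agree_only verts lab Z Y e = {}"
    unfolding agree_only_def by blast
  moreover have "mistake verts lab Z e \<le> card (agree_only verts lab Y Z e)"
  proof (cases "\<exists>i\<in>verts e. Z i \<noteq> lab e")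
    case True
    with False have "agree_only verts lab Y Z e \<noteq> {}"
      unfolding agree_only_def by blast
    moreover have "finite (agree_only verts lab Y Z e)"
      using assms unfolding agree_only_def by simp
    ultimately show ?thesis
      by (simp add: mistake_def Suc_leI card_gt_0_iff)
  qed (simp add: mistake_def)
  ultimately show ?thesis by simp
qed

lemma sum_card_agree_only:
  assumes "finite V" "finite E" "\<And>e. e \<in> E \<Longrightarrow> verts e \<subseteq> V"
  shows "(\<Sum>e\<in>E. card (agree_only verts lab Y Z e))
           = (\<Sum>u\<in>V. if Y u \<noteq> Z u then label_degree E verts lab u (Y u) else 0)"
proof -
  have "(\<Sum>e\<in>E. card (agree_only verts lab Y Z e))
          = (\<Sum>e\<in>E. \<Sum>u\<in>V. if u \<in> agree_only verts lab Y Z e then 1 else 0)"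
  proof (intro sum.cong refl)
    fix e assume "e \<in> E"
    then have "agree_only verts lab Y Z e \<subseteq> V"
      using assms(3) unfolding agree_only_def by blast
    then show "card (agree_only verts lab Y Z e)
                 = (\<Sum>u\<in>V. if u \<in> agree_only verts lab Y Z e then 1 else 0)"
      using assms(1) by (simp add: sum.If_cases Int_absorb1)
  qed
  also have "\<dots> = (\<Sum>u\<in>V. \<Sum>e\<in>E. if u \<in> agree_only verts lab Y Z e then 1 else 0)"
    by (rule sum.swap)
  also have "\<dots> = (\<Sum>u\<in>V. if Y u \<noteq> Z u then label_degree E verts lab u (Y u) else 0)"
  proof (intro sum.cong refl)
    fix u
    have "(\<Sum>e\<in>E. if u \<in> agree_only verts lab Y Z e then 1 else 0)
            = (\<Sum>e\<in>E. if Y u \<noteq> Z u \<and> u \<in> verts e \<and> lab e = Y u then 1 else 0)"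
      by (intro sum.cong refl) (auto simp: agree_only_def)
    also have "\<dots> = (if Y u \<noteq> Z u then label_degree E verts lab u (Y u) else 0)"
      using assms(2) by (simp add: sum.If_cases label_degree_def Int_def)
    finally show "(\<Sum>e\<in>E. if u \<in> agree_only verts lab Y Z e then 1 else 0)
            = (if Y u \<noteq> Z u then label_degree E verts lab u (Y u) else 0)" .
  qed
  finally show ?thesis .
qed

lemma majority_vote_sum_agree_only_le:
  assumes G: "edge_labeled_hypergraph V E verts C lab"
    and Z: "majority_vote V E verts C lab Z"
    and Y: "is_clustering V C Y"
  shows "(\<Sum>e\<in>E. card (agree_only verts lab Y Z e)) \<le> (\<Sum>e\<in>E. card (agree_only verts lab Z Y e))"
proof -
  have fin: "finite V" "finite E" and sub: "\<And>e. e \<in> E \<Longrightarrow> verts e \<subseteq> V"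
    using G unfolding edge_labeled_hypergraph_def by auto
  have "(\<Sum>u\<in>V. if Y u \<noteq> Z u then label_degree E verts lab u (Y u) else 0)
          \<le> (\<Sum>u\<in>V. if Z u \<noteq> Y u then label_degree E verts lab u (Z u) else 0)"
    using Y Z unfolding majority_vote_def is_clustering_def by (intro sum_mono) auto
  then show ?thesis
    by (simp only: sum_card_agree_only[OF fin sub])
qed

lemma edge_size_le_max_edge_size:
  assumes "finite E" "e \<in> E"
  shows "card (verts e) \<le> max_edge_size E verts"
  unfolding max_edge_size_def using assms by simp

lemma CatEdgeClus_majority_vote_le:
  assumes G: "edge_labeled_hypergraph V E verts C lab"
    and Z: "majority_vote V E verts C lab Z"
    and Y: "is_clustering V C Y"
  shows "CatEdgeClus E verts lab Z \<le> max_edge_size E verts * CatEdgeClus E verts lab Y"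
proof -
  let ?r = "max_edge_size E verts"
  let ?S = "\<lambda>Y Z. \<Sum>e\<in>E. card (agree_only verts lab Y Z e)"
  have fE: "finite E" and fin_edge: "\<And>e. e \<in> E \<Longrightarrow> finite (verts e)"
    using G unfolding edge_labeled_hypergraph_def by (auto intro: finite_subset)
  have "CatEdgeClus E verts lab Z + ?S Z Y
          \<le> (\<Sum>e\<in>E. card (verts e) * mistake verts lab Y e) + ?S Y Z"
    unfolding CatEdgeClus_def sum.distrib[symmetric]
    by (intro sum_mono mistake_add_card_agree_only_le fin_edge)
  also have "(\<Sum>e\<in>E. card (verts e) * mistake verts lab Y e) \<le> (\<Sum>e\<in>E. ?r * mistake verts lab Y e)"
    using fE by (intro sum_mono mult_right_mono edge_size_le_max_edge_size) auto
  also have "\<dots> = ?r * CatEdgeClus E verts lab Y"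
    by (simp add: CatEdgeClus_def sum_distrib_left)
  finally show ?thesis
    using majority_vote_sum_agree_only_le[OF G Z Y] by linarith
qed

theorem mainTheorem9:
  fixes V :: "'v set" and E :: "'e set" and verts :: "'e \<Rightarrow> 'v set"
    and C :: "'c set" and lab :: "'e \<Rightarrow> 'c" and Ymv :: "'v \<Rightarrow> 'c"
  assumes "edge_labeled_hypergraph V E verts C lab"
    and "majority_vote V E verts C lab Ymv"
  shows "CatEdgeClus E verts lab Ymv \<le>
           max_edge_size E verts * Min {CatEdgeClus E verts lab Y | Y. is_clustering V C Y}"
proof -
  let ?costs = "{CatEdgeClus E verts lab Y | Y. is_clustering V C Y}"
  have "?costs \<subseteq> {..card E}"
    using CatEdgeClus_le_card by auto
  then have "finite ?costs"
    by (rule finite_subset) simp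
  moreover have "?costs \<noteq> {}"
    using assms(2) unfolding majority_vote_def by auto
  ultimately have "Min ?costs \<in> ?costs"
    by (rule Min_in)
  then obtain Y where "is_clustering V C Y" "Min ?costs = CatEdgeClus E verts lab Y"
    by auto
  then show ?thesis
    using CatEdgeClus_majority_vote_le[OF assms] by simp
qed

end
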